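(* Let $m\in\mathbb{N}$, $c=(c_1,\ldots,c_m)\in\mathbb{N}^m$ with all $c_j\ge 1$, and $\mathcal{X}=\{0,\ldots,c_1\}\times\cdots\times\{0,\ldots,c_m\}$. Let $\mathcal{V}_{\mathrm{mon}}$ be the set of all functions $\hat v:\mathcal{X}\to\mathbb{R}_{\ge 0}$ satisfying (M) monotonicity: for $a,b\in\mathcal{X}$ with $a_k\le b_k$ for all $k\in\{1,\ldots,m\}$, $\hat v(a)\le \hat v(b)$; and (N) normalization: $\hat v((0,\ldots,0))=0$. Then $\mathcal{V}_{\mathrm{mon}}$ is exactly the set of all multiset MVNNs $\mathcal{M}^{(W,b)}:\mathcal{X}\to\mathbb{R}_{\ge0}$ (over all choices of depth, layer widths, cutoffs $t^k>0$, entrywise non-negative weights $W$ and entrywise non-positive biases $b$). That is, every function satisfying (M) and (N) can be represented exactly as such a multiset MVNN, and every such multiset MVNN satisfies (M) and (N).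
   Context: A multiset MVNN (mMVNN) is a map $\mathcal{M}^{(W,b)}:\mathcal{X}\to\mathbb{R}_{\ge0}$ of the form $$\mathcal{M}^{(W,b)}(x)= W^{K}\varphi_{0,t^{K-1}}\Big(\cdots\varphi_{0,t^{1}}\big(W^{1}(Dx)+b^{1}\big)\cdots\Big),$$ where $K\in\mathbb{N}$ is the number of hidden layers; $\varphi_{0,t}(z)=\min(t,\max(0,z))$ (applied componentwise) is the bounded ReLU with cutoff $t>0$, with cutoffs $t^k>0$ for $k=1,\ldots,K-1$; $W^k\in\mathbb{R}^{d^k\times d^{k-1}}$ for $k=1,\ldots,K$ are matrices with all entries $\ge 0$, where $d^0=m$ and $d^K=1$; $b^k\in\mathbb{R}^{d^k}$ for $k=1,\ldots,K-1$ are vectors with all entries $\le 0$; and $D=\mathrm{diag}(1/c_1,\ldots,1/c_m)$ is a fixed (non-trainable) normalization matrix. *)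

theory Defs
  imports Main "HOL-Analysis.Analysis"
begin

text \<open>Vectors in R^d are represented as functions nat \<Rightarrow> real (only indices < d matter);
  matrices in R^(d x d') as functions nat \<Rightarrow> nat \<Rightarrow> real (row i, column j).\<close>

definition domX :: "nat \<Rightarrow> (nat \<Rightarrow> nat) \<Rightarrow> (nat \<Rightarrow> nat) set" where
  "domX m c = {x. (\<forall>i<m. x i \<le> c i) \<and> (\<forall>i\<ge>m. x i = 0)}"

definition brelu :: "real \<Rightarrow> real \<Rightarrow> real" where
  "brelu t z = min t (max 0 z)"

text \<open>Hidden layer outputs z^k (k = 0 is the normalized input D x).
  ds = [d^0,...,d^K], Ws = [W^1,...,W^K], bs = [b^1,...,b^(K-1)], ts = [t^1,...,t^(K-1)].\<close>
fun mvnn_hidden :: "nat \<Rightarrow> (nat \<Rightarrow> nat) \<Rightarrow> nat list \<Rightarrow> (nat \<Rightarrow> nat \<Rightarrow> real) list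
      \<Rightarrow> (nat \<Rightarrow> real) list \<Rightarrow> real list \<Rightarrow> (nat \<Rightarrow> nat) \<Rightarrow> nat \<Rightarrow> (nat \<Rightarrow> real)" where
  "mvnn_hidden m c ds Ws bs ts x 0 = (\<lambda>j. real (x j) / real (c j))"
| "mvnn_hidden m c ds Ws bs ts x (Suc k) =
     (\<lambda>i. brelu (ts ! k)
        ((\<Sum>j<ds ! k. (Ws ! k) i j * mvnn_hidden m c ds Ws bs ts x k j) + (bs ! k) i))"

definition mvnn_eval :: "nat \<Rightarrow> (nat \<Rightarrow> nat) \<Rightarrow> nat list \<Rightarrow> (nat \<Rightarrow> nat \<Rightarrow> real) list
      \<Rightarrow> (nat \<Rightarrow> real) list \<Rightarrow> real list \<Rightarrow> (nat \<Rightarrow> nat) \<Rightarrow> real" where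
  "mvnn_eval m c ds Ws bs ts x =
     (let K = length Ws in
      \<Sum>j<ds ! (K - 1). (Ws ! (K - 1)) 0 j * mvnn_hidden m c ds Ws bs ts x (K - 1) j)"

definition valid_mvnn :: "nat \<Rightarrow> nat list \<Rightarrow> (nat \<Rightarrow> nat \<Rightarrow> real) list
      \<Rightarrow> (nat \<Rightarrow> real) list \<Rightarrow> real list \<Rightarrow> bool" where
  "valid_mvnn m ds Ws bs ts \<longleftrightarrow>
     (let K = length Ws in
      K \<ge> 1 \<and> length ds = K + 1 \<and> ds ! 0 = m \<and> ds ! K = 1 \<and>
      length bs = K - 1 \<and> length ts = K - 1 \<and>
      (\<forall>k<K. \<forall>i<ds ! (Suc k). \<forall>j<ds ! k. (Ws ! k) i j \<ge> 0) \<and>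
      (\<forall>k<K - 1. \<forall>i<ds ! (Suc k). (bs ! k) i \<le> 0) \<and>
      (\<forall>k<K - 1. ts ! k > 0))"

definition in_Vmon :: "nat \<Rightarrow> (nat \<Rightarrow> nat) \<Rightarrow> ((nat \<Rightarrow> nat) \<Rightarrow> real) \<Rightarrow> bool" where
  "in_Vmon m c v \<longleftrightarrow>
     (\<forall>x\<in>domX m c. v x \<ge> 0) \<and>
     (\<forall>a\<in>domX m c. \<forall>b\<in>domX m c. (\<forall>k<m. a k \<le> b k) \<longrightarrow> v a \<le> v b) \<and>
     v (\<lambda>_. 0) = 0"

end

theory Submission
  imports Defs
begin

(* A network with nonnegative weights, nonpositive biases and monotone activations is monotone
   and vanishes at 0. Conversely, let 0 = r_0 < r_1 < ... < r_L be the values of v on the grid.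
   Then v x = sum_l (r_(l+1) - r_l) [r_(l+1) <= v x], and by monotonicity each superlevel set
   {v >= r_(l+1)} is the union of the orthants {x >= a} over the nonzero grid points a with
   v a >= r_(l+1). Four layers compute this: the unary code [r < x_i] of every coordinate,
   the orthant indicators [a <= x] as AND gates, the superlevel indicators as OR gates, and
   the telescoping sum. *)

lemma brelu_mono: "z \<le> w \<Longrightarrow> brelu t z \<le> brelu t w"
  unfolding brelu_def by auto

lemma brelu_nonneg: "0 \<le> t \<Longrightarrow> 0 \<le> brelu t z"
  unfolding brelu_def by auto

lemma brelu_one_nat_diff: "brelu 1 (real a - real b) = (if b < a then 1 else 0)"
  unfolding brelu_def by auto

lemma brelu_one_sum_indicator:
  assumes "finite S"
  shows "brelu 1 (\<Sum>p\<in>S. if Q p then 1 else 0) = (if \<exists>p\<in>S. Q p then 1 else 0)"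
proof -
  have "(\<Sum>p\<in>S. if Q p then 1 else 0) = real (card {p\<in>S. Q p})"
    using assms by (simp add: sum.If_cases Int_def conj_commute)
  moreover have "0 < card {p\<in>S. Q p} \<longleftrightarrow> (\<exists>p\<in>S. Q p)"
    using assms by (auto simp: card_gt_0_iff)
  ultimately show ?thesis
    using brelu_one_nat_diff[of "card {p\<in>S. Q p}" 0] by simp
qed

lemma sum_div_mod:
  fixes B :: nat
  shows "(\<Sum>n<m * B. f (n div B) (n mod B)) = (\<Sum>i<m. \<Sum>r<B. f i r)"
proof (cases "B = 0")
  case False
  have "(\<Sum>n\<in>{i * B..<i * B + B}. f (n div B) (n mod B)) = (\<Sum>r<B. f i r)" for i
    using False by (simp add: sum.atLeastLessThan_shift_0 atLeast0LessThan)
  then show ?thesis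
    using sum.nat_group[of "\<lambda>n. f (n div B) (n mod B)" B m] by simp
qed simp

lemma sum_lessThan_indicator:
  assumes "k \<le> B"
  shows "(\<Sum>r<B. if r < k then 1 else 0 :: real) = real k"
proof -
  have "{..<B} \<inter> {r. r < k} = {..<k}" using assms by auto
  then show ?thesis by (simp add: sum.If_cases)
qed

lemma sum_min_eq_sum_iff:
  fixes a x :: "'i \<Rightarrow> nat"
  assumes "finite I"
  shows "(\<Sum>i\<in>I. min (a i) (x i)) = (\<Sum>i\<in>I. a i) \<longleftrightarrow> (\<forall>i\<in>I. a i \<le> x i)"
proof
  assume "(\<Sum>i\<in>I. min (a i) (x i)) = (\<Sum>i\<in>I. a i)"
  then have "min (a i) (x i) = a i" if "i \<in> I" for i
    using sum_mono_inv[of "\<lambda>i. min (a i) (x i)" I a] that assms by simp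
  then show "\<forall>i\<in>I. a i \<le> x i" by (metis min.absorb_iff1)
qed (simp add: min_absorb1)

lemma strict_sorted_nth_le_iff:
  fixes xs :: "'a :: linorder list"
  assumes "sorted_wrt (<) xs" "i < length xs" "j < length xs"
  shows "xs ! i \<le> xs ! j \<longleftrightarrow> i \<le> j"
  using sorted_wrt_nth_less[OF assms(1), of i j] sorted_wrt_nth_less[OF assms(1), of j i] assms
  by (cases i j rule: linorder_cases) auto

lemma threshold_telescope:
  fixes R :: "'a :: linordered_idom list"
  assumes sorted: "sorted_wrt (<) R" and y: "y \<in> set R"
  shows "(\<Sum>l<length R - 1. (R ! Suc l - R ! l) * (if R ! Suc l \<le> y then 1 else 0)) = y - R ! 0"
proof -
  obtain L where L: "L < length R" "R ! L = y"
    using y by (metis in_set_conv_nth)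
  have "(\<Sum>l<length R - 1. (R ! Suc l - R ! l) * (if R ! Suc l \<le> y then 1 else 0))
      = (\<Sum>l<length R - 1. if l < L then R ! Suc l - R ! l else 0)"
    using L strict_sorted_nth_le_iff[OF sorted] by (intro sum.cong) auto
  also have "\<dots> = (\<Sum>l<L. R ! Suc l - R ! l)"
  proof -
    have "{..<length R - 1} \<inter> {l. l < L} = {..<L}" using L by auto
    then show ?thesis by (simp add: sum.If_cases)
  qed
  also have "\<dots> = y - R ! 0"
    using L by (simp add: sum_lessThan_telescope)
  finally show ?thesis .
qed

lemma valid_mvnnD:
  assumes "valid_mvnn m ds Ws bs ts"
  shows "1 \<le> length Ws" "ds ! 0 = m" "ds ! length Ws = 1"
    and "\<And>k i j. k < length Ws \<Longrightarrow> i < ds ! Suc k \<Longrightarrow> j < ds ! k \<Longrightarrow> 0 \<le> (Ws ! k) i j"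
    and "\<And>k i. k < length Ws - 1 \<Longrightarrow> i < ds ! Suc k \<Longrightarrow> (bs ! k) i \<le> 0"
    and "\<And>k. k < length Ws - 1 \<Longrightarrow> 0 < ts ! k"
  using assms by (auto simp: valid_mvnn_def Let_def)

lemma mvnn_hidden_mono:
  assumes valid: "valid_mvnn m ds Ws bs ts" and le: "\<forall>j<m. x j \<le> y j"
  shows "k < length Ws \<Longrightarrow> i < ds ! k \<Longrightarrow>
    0 \<le> mvnn_hidden m c ds Ws bs ts x k i \<and>
    mvnn_hidden m c ds Ws bs ts x k i \<le> mvnn_hidden m c ds Ws bs ts y k i"
proof (induction k arbitrary: i)
  case 0
  then show ?case
    using le valid_mvnnD(2)[OF valid] by (auto intro: divide_right_mono)
next
  case (Suc k)
  let ?h = "mvnn_hidden m c ds Ws bs ts"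
  have "(\<Sum>j<ds ! k. (Ws ! k) i j * ?h x k j) \<le> (\<Sum>j<ds ! k. (Ws ! k) i j * ?h y k j)"
    using Suc valid_mvnnD(4)[OF valid] by (intro sum_mono mult_left_mono) auto
  then show ?case
    using Suc.prems valid_mvnnD(6)[OF valid, of k] by (simp add: brelu_mono brelu_nonneg less_imp_le)
qed

lemma mvnn_hidden_zero:
  assumes valid: "valid_mvnn m ds Ws bs ts"
  shows "k < length Ws \<Longrightarrow> i < ds ! k \<Longrightarrow> mvnn_hidden m c ds Ws bs ts (\<lambda>_. 0) k i = 0"
proof (induction k arbitrary: i)
  case (Suc k)
  then show ?case
    using valid_mvnnD(5,6)[OF valid, of k] by (simp add: brelu_def)
qed simp

lemma mvnn_in_Vmon:
  assumes valid: "valid_mvnn m ds Ws bs ts"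
  shows "in_Vmon m c (mvnn_eval m c ds Ws bs ts)"
proof -
  let ?K = "length Ws"
  have K: "?K - 1 < ?K" "Suc (?K - 1) = ?K" "ds ! ?K = 1"
    using valid_mvnnD(1,3)[OF valid] by auto
  have out_nonneg: "0 \<le> (Ws ! (?K - 1)) 0 j" if "j < ds ! (?K - 1)" for j
    using valid_mvnnD(4)[OF valid K(1)] K that by simp
  have mono: "0 \<le> mvnn_eval m c ds Ws bs ts x \<and> mvnn_eval m c ds Ws bs ts x \<le> mvnn_eval m c ds Ws bs ts y"
    if "\<forall>j<m. x j \<le> y j" for x y
    using mvnn_hidden_mono[OF valid that K(1)] out_nonneg unfolding mvnn_eval_def Let_def
    by (auto intro!: sum_nonneg sum_mono mult_nonneg_nonneg mult_left_mono)
  have "mvnn_eval m c ds Ws bs ts (\<lambda>_. 0) = 0"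
    using mvnn_hidden_zero[OF valid K(1)] unfolding mvnn_eval_def Let_def by simp
  then show ?thesis
    using mono[of "\<lambda>_. 0"] mono unfolding in_Vmon_def by auto
qed

lemma finite_domX: "finite (domX m c)"
proof -
  have "domX m c \<subseteq> {x. \<forall>i. (i \<in> {..<m} \<longrightarrow> x i \<in> {..\<Sum>j<m. c j}) \<and> (i \<notin> {..<m} \<longrightarrow> x i = 0)}"
    by (auto simp: domX_def intro: order_trans[OF _ member_le_sum])
  then show ?thesis
    by (rule finite_subset) (intro finite_set_of_finite_funs; simp)
qed

lemma domX_eq_zero:
  assumes "x \<in> domX m c" "\<forall>i<m. x i = 0"
  shows "x = (\<lambda>_. 0)"
proof
  fix i show "x i = 0"
    using assms by (cases "i < m") (auto simp: domX_def)
qed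

lemma in_Vmon_superlevel_iff:
  assumes v: "in_Vmon m c v" and x: "x \<in> domX m c" and pos: "0 < \<theta>"
  shows "\<theta> \<le> v x \<longleftrightarrow> (\<exists>a\<in>domX m c. \<theta> \<le> v a \<and> (\<exists>i<m. 0 < a i) \<and> (\<forall>i<m. a i \<le> x i))"
proof
  assume le: "\<theta> \<le> v x"
  have "v (\<lambda>_. 0) = 0" using v by (simp add: in_Vmon_def)
  then have "\<exists>i<m. 0 < x i"
    using domX_eq_zero[OF x] le pos by fastforce
  then show "\<exists>a\<in>domX m c. \<theta> \<le> v a \<and> (\<exists>i<m. 0 < a i) \<and> (\<forall>i<m. a i \<le> x i)"
    using x le by blast
next
  assume "\<exists>a\<in>domX m c. \<theta> \<le> v a \<and> (\<exists>i<m. 0 < a i) \<and> (\<forall>i<m. a i \<le> x i)"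
  then show "\<theta> \<le> v x"
    using v x unfolding in_Vmon_def by (meson order_trans)
qed

locale staircase_network =
  fixes m :: nat and c :: "nat \<Rightarrow> nat" and v :: "(nat \<Rightarrow> nat) \<Rightarrow> real"
    and P :: "(nat \<Rightarrow> nat) list"
  assumes c_pos: "\<And>j. j < m \<Longrightarrow> 1 \<le> c j"
    and v_Vmon: "in_Vmon m c v"
    and set_P: "set P = domX m c"
begin

definition B :: nat where "B = (\<Sum>i<m. c i)"

definition R :: "real list" where "R = sorted_list_of_set (v ` domX m c)"

(* Neuron n of the first hidden layer compares coordinate n div B with the threshold n mod B. *)
definition unary_weights :: "nat \<Rightarrow> nat \<Rightarrow> real" where
  "unary_weights n j = (if j = n div B then real (c j) else 0)"

definition unary_bias :: "nat \<Rightarrow> real" where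
  "unary_bias n = - real (n mod B)"

definition orthant_weights :: "nat \<Rightarrow> nat \<Rightarrow> real" where
  "orthant_weights p n = (if n mod B < (P ! p) (n div B) then 1 else 0)"

(* For the zero point the truncated subtraction gives bias 0, so its neuron is constantly 0. *)
definition orthant_bias :: "nat \<Rightarrow> real" where
  "orthant_bias p = - real ((\<Sum>i<m. (P ! p) i) - 1)"

definition level_weights :: "nat \<Rightarrow> nat \<Rightarrow> real" where
  "level_weights l p = (if R ! Suc l \<le> v (P ! p) then 1 else 0)"

definition increment_weights :: "nat \<Rightarrow> nat \<Rightarrow> real" where
  "increment_weights i l = R ! Suc l - R ! l"

definition ds :: "nat list" where "ds = [m, m * B, length P, length R - 1, 1]"

definition Ws :: "(nat \<Rightarrow> nat \<Rightarrow> real) list" where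
  "Ws = [unary_weights, orthant_weights, level_weights, increment_weights]"

definition bs :: "(nat \<Rightarrow> real) list" where
  "bs = [unary_bias, orthant_bias, \<lambda>_. 0]"

definition ts :: "real list" where "ts = [1, 1, 1]"

abbreviation layer :: "(nat \<Rightarrow> nat) \<Rightarrow> nat \<Rightarrow> nat \<Rightarrow> real" where
  "layer \<equiv> mvnn_hidden m c ds Ws bs ts"

lemma point_le_B: "a \<in> domX m c \<Longrightarrow> i < m \<Longrightarrow> a i \<le> B"
  unfolding B_def domX_def by (auto intro: order_trans[OF _ member_le_sum])

lemma sorted_R: "sorted_wrt (<) R"
  by (simp add: R_def)

lemma set_R: "set R = v ` domX m c"
  by (simp add: R_def finite_domX)

lemma R_0: "R ! 0 = 0"
proof -
  have "(\<lambda>_. 0) \<in> domX m c" by (simp add: domX_def)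
  moreover have "v (\<lambda>_. 0) = 0" "\<forall>x\<in>domX m c. 0 \<le> v x"
    using v_Vmon by (auto simp: in_Vmon_def)
  ultimately have "Min (v ` domX m c) = 0"
    by (intro Min_eqI) (auto simp: finite_domX)
  moreover have "v ` domX m c \<noteq> {}" using \<open>(\<lambda>_. 0) \<in> domX m c\<close> by blast
  ultimately show ?thesis
    by (simp add: R_def sorted_list_of_set_nonempty finite_domX)
qed

lemma R_Suc_gt: "l < length R - 1 \<Longrightarrow> R ! l < R ! Suc l"
  using sorted_wrt_nth_less[OF sorted_R] by simp

lemma R_Suc_pos: "l < length R - 1 \<Longrightarrow> 0 < R ! Suc l"
  using sorted_wrt_nth_less[OF sorted_R, of 0 "Suc l"] R_0 by simp

lemma layer_1:
  assumes "n < m * B"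
  shows "layer x 1 n = (if n mod B < x (n div B) then 1 else 0)"
proof -
  have i: "n div B < m" using assms by (simp add: less_mult_imp_div_less)
  have "(\<Sum>j<m. unary_weights n j * (real (x j) / real (c j)))
      = (\<Sum>j<m. if j = n div B then real (x j) else 0)"
    using c_pos by (intro sum.cong) (auto simp: unary_weights_def Suc_le_eq)
  also have "\<dots> = real (x (n div B))"
    using i by simp
  finally have "layer x 1 n = brelu 1 (real (x (n div B)) - real (n mod B))"
    by (simp add: ds_def Ws_def bs_def ts_def unary_bias_def)
  then show ?thesis by (simp add: brelu_one_nat_diff)
qed

lemma layer_2:
  assumes p: "p < length P"
  shows "layer x 2 p = (if (\<exists>i<m. 0 < (P ! p) i) \<and> (\<forall>i<m. (P ! p) i \<le> x i) then 1 else 0)"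
proof -
  let ?a = "P ! p"
  have a: "?a \<in> domX m c" using p set_P nth_mem by blast
  have "layer x 2 p = brelu 1 ((\<Sum>n<m * B. orthant_weights p n * layer x 1 n) + orthant_bias p)"
    by (simp add: numeral_2_eq_2 ds_def Ws_def bs_def ts_def)
  also have "(\<Sum>n<m * B. orthant_weights p n * layer x 1 n)
      = (\<Sum>n<m * B. (\<lambda>i r. if r < min (?a i) (x i) then 1 else 0) (n div B) (n mod B))"
    using layer_1 by (intro sum.cong) (simp_all add: orthant_weights_def del: mvnn_hidden.simps)
  also have "\<dots> = (\<Sum>i<m. \<Sum>r<B. if r < min (?a i) (x i) then 1 else 0)"
    by (rule sum_div_mod)
  also have "\<dots> = (\<Sum>i<m. real (min (?a i) (x i)))"
    using point_le_B[OF a] by (intro sum.cong refl sum_lessThan_indicator) (simp add: min.coboundedI1)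
  finally have "layer x 2 p = brelu 1 (real (\<Sum>i<m. min (?a i) (x i)) - real ((\<Sum>i<m. ?a i) - 1))"
    by (simp add: orthant_bias_def del: of_nat_min)
  moreover have "(\<Sum>i<m. ?a i) - 1 < (\<Sum>i<m. min (?a i) (x i))
      \<longleftrightarrow> 0 < (\<Sum>i<m. ?a i) \<and> (\<Sum>i<m. min (?a i) (x i)) = (\<Sum>i<m. ?a i)"
    using sum_mono[of "{..<m}" "\<lambda>i. min (?a i) (x i)" ?a] by auto
  moreover have "0 < (\<Sum>i<m. ?a i) \<longleftrightarrow> (\<exists>i<m. 0 < ?a i)"
    by (auto simp flip: neq0_conv)
  ultimately show ?thesis
    using sum_min_eq_sum_iff[of "{..<m}" ?a x] by (simp add: brelu_one_nat_diff del: of_nat_sum)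
qed

lemma layer_3:
  assumes x: "x \<in> domX m c" and l: "l < length R - 1"
  shows "layer x 3 l = (if R ! Suc l \<le> v x then 1 else 0)"
proof -
  let ?Q = "\<lambda>a. R ! Suc l \<le> v a \<and> (\<exists>i<m. 0 < a i) \<and> (\<forall>i<m. a i \<le> x i)"
  have "layer x 3 l = brelu 1 (\<Sum>p<length P. level_weights l p * layer x 2 p)"
    by (simp add: numeral_3_eq_3 numeral_2_eq_2 ds_def Ws_def bs_def ts_def)
  also have "(\<Sum>p<length P. level_weights l p * layer x 2 p) = (\<Sum>p<length P. if ?Q (P ! p) then 1 else 0)"
    by (intro sum.cong) (simp_all add: level_weights_def layer_2 del: mvnn_hidden.simps)
  also have "brelu 1 \<dots> = (if \<exists>p\<in>{..<length P}. ?Q (P ! p) then 1 else 0)"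
    by (simp add: brelu_one_sum_indicator)
  also have "(\<exists>p\<in>{..<length P}. ?Q (P ! p)) \<longleftrightarrow> (\<exists>a\<in>domX m c. ?Q a)"
    using set_P by (metis in_set_conv_nth lessThan_iff)
  also have "\<dots> \<longleftrightarrow> R ! Suc l \<le> v x"
    using in_Vmon_superlevel_iff[OF v_Vmon x R_Suc_pos[OF l]] by simp
  finally show ?thesis .
qed

lemma network_eval:
  assumes x: "x \<in> domX m c"
  shows "mvnn_eval m c ds Ws bs ts x = v x"
proof -
  have "mvnn_eval m c ds Ws bs ts x = (\<Sum>l<length R - 1. increment_weights 0 l * layer x 3 l)"
    by (simp add: mvnn_eval_def numeral_3_eq_3 ds_def Ws_def del: mvnn_hidden.simps)
  also have "\<dots> = (\<Sum>l<length R - 1. (R ! Suc l - R ! l) * (if R ! Suc l \<le> v x then 1 else 0))"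
    using layer_3[OF x] by (intro sum.cong) (simp_all add: increment_weights_def del: mvnn_hidden.simps)
  also have "\<dots> = v x - R ! 0"
    using x set_R by (intro threshold_telescope sorted_R) auto
  finally show ?thesis
    by (simp add: R_0)
qed

lemma network_valid: "valid_mvnn m ds Ws bs ts"
proof -
  have "0 \<le> increment_weights i l" if "l < length R - 1" for i l
    using R_Suc_gt[OF that] by (simp add: increment_weights_def)
  then show ?thesis
    unfolding valid_mvnn_def Let_def
    by (auto simp: ds_def Ws_def bs_def ts_def less_Suc_eq numeral_eq_Suc unary_weights_def
        orthant_weights_def level_weights_def unary_bias_def orthant_bias_def)
qed

end

lemma in_Vmon_cong:
  assumes "\<forall>x\<in>domX m c. v x = w x"
  shows "in_Vmon m c v \<longleftrightarrow> in_Vmon m c w"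
proof -
  have "(\<lambda>_. 0) \<in> domX m c" by (simp add: domX_def)
  then show ?thesis
    using assms unfolding in_Vmon_def by auto
qed

lemma in_Vmon_imp_mvnn:
  assumes "\<forall>j<m. 1 \<le> c j" and "in_Vmon m c v"
  shows "\<exists>ds Ws bs ts. valid_mvnn m ds Ws bs ts \<and> (\<forall>x\<in>domX m c. v x = mvnn_eval m c ds Ws bs ts x)"
proof -
  obtain P where "set P = domX m c"
    using finite_list[OF finite_domX] by blast
  then interpret staircase_network m c v P
    using assms by unfold_locales auto
  show ?thesis
    using network_valid network_eval by metis
qed

theorem theorem1:
  fixes m :: nat and c :: "nat \<Rightarrow> nat"
  assumes "\<forall>j<m. c j \<ge> 1"
  shows "\<forall>v :: (nat \<Rightarrow> nat) \<Rightarrow> real.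
           in_Vmon m c v \<longleftrightarrow>
           (\<exists>ds Ws bs ts. valid_mvnn m ds Ws bs ts \<and>
              (\<forall>x\<in>domX m c. v x = mvnn_eval m c ds Ws bs ts x))"
proof (intro allI iffI)
  fix v :: "(nat \<Rightarrow> nat) \<Rightarrow> real"
  assume "in_Vmon m c v"
  then show "\<exists>ds Ws bs ts. valid_mvnn m ds Ws bs ts \<and> (\<forall>x\<in>domX m c. v x = mvnn_eval m c ds Ws bs ts x)"
    using in_Vmon_imp_mvnn assms by blast
next
  fix v :: "(nat \<Rightarrow> nat) \<Rightarrow> real"
  assume "\<exists>ds Ws bs ts. valid_mvnn m ds Ws bs ts \<and> (\<forall>x\<in>domX m c. v x = mvnn_eval m c ds Ws bs ts x)"
  then show "in_Vmon m c v"
    using mvnn_in_Vmon in_Vmon_cong by metis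
qed

end
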